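(* Let $G$ be a finite metacyclic group of even order. Then $G$ has a cyclic normal subgroup $N$ such that $G/N$ is cyclic of even order. If moreover $G$ is split metacyclic, then $G\cong C_m\rtimes C_n$ for some $m,n$ with $n$ even.
   Context: A finite group $G$ is metacyclic if it has a cyclic normal subgroup $N$ with $G/N$ cyclic. $G$ is split metacyclic if $G\cong C_m\rtimes C_n$ for some $m,n$, where $C_k$ is the cyclic group of order $k$. *)

theory Defs
  imports "HOL-Algebra.Algebra"
begin

definition semidirect_product ::
  "('a, 'c) monoid_scheme \<Rightarrow> ('b, 'd) monoid_scheme \<Rightarrow> ('b \<Rightarrow> 'a \<Rightarrow> 'a) \<Rightarrow> ('a \<times> 'b) monoid"
  where "semidirect_product N H phi =
    \<lparr>carrier = carrier N \<times> carrier H,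
     monoid.mult = (\<lambda>(a, b) (c, d). (a \<otimes>\<^bsub>N\<^esub> phi b c, b \<otimes>\<^bsub>H\<^esub> d)),
     one = (\<one>\<^bsub>N\<^esub>, \<one>\<^bsub>H\<^esub>)\<rparr>"

definition metacyclic :: "('g, 'e) monoid_scheme \<Rightarrow> bool"
  where "metacyclic G \<longleftrightarrow>
    (\<exists>N. N \<lhd> G \<and> cyclic_group (G\<lparr>carrier := N\<rparr>) \<and> cyclic_group (G Mod N))"

text \<open>C_k is the cyclic group of order k, i.e. integers mod k (k > 0).
  A semidirect product C_m \<rtimes> C_n is given by a homomorphism C_n \<rightarrow> Aut(C_m).\<close>
definition is_split_metacyclic_with :: "('g, 'e) monoid_scheme \<Rightarrow> nat \<Rightarrow> nat \<Rightarrow> bool"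
  where "is_split_metacyclic_with G m n \<longleftrightarrow> 0 < m \<and> 0 < n \<and>
    (\<exists>phi. phi \<in> hom (integer_mod_group n) (AutoGroup (integer_mod_group m)) \<and>
       G \<cong> semidirect_product (integer_mod_group m) (integer_mod_group n) phi)"

definition split_metacyclic :: "('g, 'e) monoid_scheme \<Rightarrow> bool"
  where "split_metacyclic G \<longleftrightarrow> (\<exists>m n. is_split_metacyclic_with G m n)"

end

theory Submission
  imports Defs "HOL-Number_Theory.Cong"
begin

text \<open>
  Let \<open>N = \<langle>a\<rangle>\<close> be cyclic normal with \<open>G/N\<close> cyclic of odd order \<open>n\<close>. Then \<open>|N|\<close> is even,
  and \<open>M = \<langle>a\<^sup>2\<rangle>\<close>, being a subgroup of a cyclic normal subgroup, is normal of index 2 in \<open>N\<close>.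
  In \<open>G/M\<close> the coset \<open>aM\<close> is a central involution; together with \<open>gM\<close>, where \<open>gN\<close> generates
  \<open>G/N\<close>, it generates \<open>G/M\<close>, and \<open>(gM)\<^sup>n \<in> {M, aM}\<close>. Since \<open>n\<close> is odd, either \<open>gM\<close> or
  \<open>agM\<close> generates \<open>G/M\<close>, which is thus cyclic of order \<open>2n\<close>.

  For \<open>G \<cong> C\<^sub>m \<rtimes> C\<^sub>n\<close> with \<open>n\<close> odd, the generator of \<open>C\<^sub>n\<close> acts by multiplication with
  some \<open>u\<close> where \<open>u\<^sup>n \<equiv> 1 (mod m)\<close>. Writing \<open>m = 2\<^sup>k m'\<close> with \<open>m'\<close> odd, this forces
  \<open>u \<equiv> 1 (mod 2\<^sup>k)\<close>: the action is trivial on the 2-part of \<open>C\<^sub>m\<close>, which can therefore be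
  moved into the complement, \<open>G \<cong> C\<^bsub>m'\<^esub> \<rtimes> (C\<^bsub>2\<^sup>k\<^esub> \<times> C\<^sub>n) \<cong> C\<^bsub>m'\<^esub> \<rtimes> C\<^bsub>2\<^sup>k n\<^esub>\<close>.
\<close>

section \<open>Cyclic quotients by the squares of a cyclic normal subgroup\<close>

lemma (in group) pow_odd_involution:
  assumes x: "x \<in> carrier G" and xx: "x \<otimes> x = \<one>" and n: "odd n"
  shows "x [^] (n::nat) = x"
proof -
  obtain r where "n = Suc (2 * r)" using n by (metis oddE Suc_eq_plus1)
  moreover have "x [^] (2::nat) = \<one>" using x xx by (simp add: numeral_2_eq_2)
  then have "x [^] (2 * r) = \<one>" using x by (simp add: nat_pow_pow[symmetric])
  ultimately show ?thesis using x by (simp add: nat_pow_Suc2)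
qed

lemma (in group) cyclic_groupI_involution_odd_power:
  assumes A: "A \<in> carrier G" and Y: "Y \<in> carrier G" and AA: "A \<otimes> A = \<one>"
    and comm: "A \<otimes> Y = Y \<otimes> A" and n: "odd n" and Yn: "Y [^] (n::nat) \<in> {\<one>, A}"
    and gen: "\<And>y. y \<in> carrier G \<Longrightarrow> \<exists>(i::int) (j::int). y = A [^] i \<otimes> Y [^] j"
  shows "cyclic_group G"
proof -
  obtain Z p q where Z: "Z \<in> carrier G" and ZA: "Z [^] (p::int) = A" and ZY: "Z [^] (q::int) = Y"
  proof (cases "Y [^] n = A")
    case True
    then show ?thesis using that[of Y "int n" 1] Y by (simp add: int_pow_int)
  next
    case False
    then have "Y [^] n = \<one>" using Yn by blast
    have "(A \<otimes> Y) [^] n = A [^] n \<otimes> Y [^] n" by (rule pow_mult_distrib[OF comm A Y])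
    also have "\<dots> = A" using \<open>Y [^] n = \<one>\<close> pow_odd_involution[OF A AA n] A by simp
    finally have AYn: "(A \<otimes> Y) [^] n = A" .
    have "(A \<otimes> Y) [^] (int n + 1) = (A \<otimes> Y) [^] n \<otimes> (A \<otimes> Y)"
      using A Y by (simp add: int_pow_mult int_pow_int)
    also have "\<dots> = Y" using AYn A Y AA by (simp add: m_assoc[symmetric])
    finally have "(A \<otimes> Y) [^] (int n + 1) = Y" .
    moreover have "(A \<otimes> Y) [^] int n = A" using AYn by (simp add: int_pow_int)
    ultimately show ?thesis using that A Y by (meson m_closed)
  qed
  have "carrier G \<subseteq> range (\<lambda>k::int. Z [^] k)"
  proof
    fix y assume "y \<in> carrier G"
    from gen[OF this] obtain i j :: int where "y = A [^] i \<otimes> Y [^] j" by blast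
    also have "\<dots> = (Z [^] p) [^] i \<otimes> (Z [^] q) [^] j" using ZA ZY by simp
    also have "\<dots> = Z [^] (p * i + q * j)" using Z by (simp add: int_pow_pow int_pow_mult)
    finally have "y = Z [^] (p * i + q * j)" .
    then show "y \<in> range (\<lambda>k::int. Z [^] k)" by (rule image_eqI) simp
  qed
  moreover have "range (\<lambda>k::int. Z [^] k) \<subseteq> carrier G" using Z by auto
  ultimately have "carrier G = range (\<lambda>k::int. Z [^] k)" by (rule antisym)
  with Z show ?thesis unfolding cyclic_group by blast
qed

lemma (in group) conj_int_pow:
  assumes g: "g \<in> carrier G" and x: "x \<in> carrier G"
  shows "g \<otimes> x [^] (k::int) \<otimes> inv g = (g \<otimes> x \<otimes> inv g) [^] k"
proof -
  have "(\<lambda>x. g \<otimes> x \<otimes> inv g) \<in> hom G G"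
  proof (intro homI)
    fix x y assume "x \<in> carrier G" "y \<in> carrier G"
    moreover have "inv g \<otimes> (g \<otimes> z) = z" if "z \<in> carrier G" for z
      using g that by (simp add: m_assoc[symmetric])
    ultimately show "g \<otimes> (x \<otimes> y) \<otimes> inv g = g \<otimes> x \<otimes> inv g \<otimes> (g \<otimes> y \<otimes> inv g)"
      using g by (simp add: m_assoc)
  qed (use g in simp)
  from hom_int_pow[OF this x is_group is_group] show ?thesis by simp
qed

lemma (in group) cyclic_subgroup_eq_generate:
  assumes "subgroup N G" and "cyclic_group (G\<lparr>carrier := N\<rparr>)"
  shows "\<exists>a \<in> carrier G. N = generate G {a}"
proof -
  interpret N: group "G\<lparr>carrier := N\<rparr>" using assms(1) subgroup.subgroup_is_group is_group by blast
  obtain a where a: "a \<in> N" and "N = range (\<lambda>k::int. a [^]\<^bsub>G\<lparr>carrier := N\<rparr>\<^esub> k)"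
    using assms(2) N.cyclic_group by auto
  then have "N = generate G {a}"
    using int_pow_consistent[OF assms(1) a] generate_pow[of a] subgroup.mem_carrier[OF assms(1) a]
    by auto
  then show ?thesis using subgroup.mem_carrier[OF assms(1) a] by blast
qed

lemma (in group) normal_generate_int_pow:
  assumes a: "a \<in> carrier G" and nN: "generate G {a} \<lhd> G"
  shows "generate G {a [^] (r::int)} \<lhd> G"
  unfolding normal_inv_iff
proof (intro conjI ballI)
  show "subgroup (generate G {a [^] r}) G" using a by (simp add: generate_is_subgroup)
  fix g h assume g: "g \<in> carrier G" and "h \<in> generate G {a [^] r}"
  then obtain k where h: "h = a [^] (r * k)" using a by (auto simp: generate_pow int_pow_pow)
  have "g \<otimes> a \<otimes> inv g \<in> generate G {a}"
    using normal.inv_op_closed2[OF nN g] generate.incl[of a "{a}" G] by simp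
  then obtain j where "g \<otimes> a \<otimes> inv g = a [^] (j::int)" using a by (auto simp: generate_pow)
  then have "g \<otimes> h \<otimes> inv g = (a [^] r) [^] (j * k)"
    using conj_int_pow[OF g a] h a by (simp add: int_pow_pow mult_ac)
  then show "g \<otimes> h \<otimes> inv g \<in> generate G {a [^] r}" using a by (auto simp: generate_pow)
qed

lemma (in group) int_pow_mem_generate_int_pow_iff:
  assumes a: "a \<in> carrier G" and r: "r dvd int (ord a)"
  shows "a [^] (j::int) \<in> generate G {a [^] r} \<longleftrightarrow> r dvd j"
proof
  assume "a [^] j \<in> generate G {a [^] r}"
  then obtain k where "a [^] j = a [^] (r * k)" using a by (auto simp: generate_pow int_pow_pow)
  then have "a [^] (j - r * k) = \<one>" using a by (simp add: int_pow_diff)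
  then have "int (ord a) dvd j - r * k" using int_pow_eq_id[OF a] by simp
  then have "r dvd j - r * k" using r dvd_trans by blast
  then show "r dvd j" by (metis dvd_add dvd_triv_left diff_add_cancel)
next
  assume "r dvd j"
  then obtain k where "j = r * k" by blast
  then show "a [^] j \<in> generate G {a [^] r}" using a by (auto simp: generate_pow int_pow_pow)
qed

lemma (in group) rcos_generate_square_mult_commute:
  assumes a: "a \<in> carrier G" and nN: "generate G {a} \<lhd> G" and ev: "even (ord a)"
    and g: "g \<in> carrier G"
  shows "generate G {a [^] (2::int)} #> (g \<otimes> a) = generate G {a [^] (2::int)} #> (a \<otimes> g)"
proof -
  define M where "M = generate G {a [^] (2::int)}"
  interpret M: normal M G unfolding M_def by (rule normal_generate_int_pow[OF a nN])
  have memM: "a [^] i \<in> M \<longleftrightarrow> even i" for i :: int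
    unfolding M_def using int_pow_mem_generate_int_pow_iff[OF a] ev by simp
  have "g \<otimes> a \<otimes> inv g \<in> generate G {a}"
    using normal.inv_op_closed2[OF nN g] generate.incl[of a "{a}" G] by simp
  then obtain j where j: "g \<otimes> a \<otimes> inv g = a [^] (j::int)" using a by (auto simp: generate_pow)
  have "odd j"
  proof
    assume "even j"
    then have "inv g \<otimes> (g \<otimes> a \<otimes> inv g) \<otimes> g \<in> M"
      using M.inv_op_closed1[OF g] j memM by simp
    moreover have "inv g \<otimes> (g \<otimes> a \<otimes> inv g) \<otimes> g = a [^] (1::int)"
      using a g by (simp add: m_assoc[symmetric], simp add: m_assoc)
    ultimately have "a [^] (1::int) \<in> M" by simp
    then show False using memM by simp
  qed
  have "g \<otimes> a = (g \<otimes> a \<otimes> inv g) \<otimes> g" using a g by (simp add: m_assoc)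
  also have "\<dots> = a [^] j \<otimes> g" using j by simp
  also have "\<dots> = a [^] (j - 1) \<otimes> (a \<otimes> g)"
    using int_pow_mult[OF a, of "j - 1" 1] a g by (simp add: m_assoc)
  finally have "M #> (g \<otimes> a) = (M #> a [^] (j - 1)) #> (a \<otimes> g)"
    using a g M.subset by (simp add: coset_mult_assoc)
  also have "\<dots> = M #> (a \<otimes> g)"
    using M.rcos_const[OF is_group] memM \<open>odd j\<close> by simp
  finally show ?thesis unfolding M_def .
qed

lemma (in group) even_order_if_involution:
  assumes "x \<in> carrier G" and "x \<otimes> x = \<one>" and "x \<noteq> \<one>"
  shows "even (order G)"
proof (rule ccontr)
  assume "odd (order G)"
  then have "x = x [^] order G" using pow_odd_involution[OF assms(1,2)] by simp
  then show False using pow_order_eq_1[OF assms(1)] assms(3) by simp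
qed

lemma (in group) FactGroup_generated_by_rcos:
  assumes nM: "M \<lhd> G" and nN: "N \<lhd> G" and a: "a \<in> carrier G" and Na: "N = generate G {a}"
    and g: "g \<in> carrier G" and Ng: "carrier (G Mod N) = range (\<lambda>k::int. (N #> g) [^]\<^bsub>G Mod N\<^esub> k)"
    and y: "y \<in> carrier (G Mod M)"
  shows "\<exists>(i::int) (j::int). y = (M #> a) [^]\<^bsub>G Mod M\<^esub> i \<otimes>\<^bsub>G Mod M\<^esub> (M #> g) [^]\<^bsub>G Mod M\<^esub> j"
proof -
  interpret M: normal M G by (rule nM)
  interpret N: normal N G by (rule nN)
  from y[unfolded carrier_FactGroup] obtain x where y: "y = M #> x" and x: "x \<in> carrier G"
    by (rule imageE)
  have "N #> x \<in> carrier (G Mod N)" unfolding carrier_FactGroup using x by blast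
  then obtain j :: int where "N #> x = (N #> g) [^]\<^bsub>G Mod N\<^esub> j" unfolding Ng by blast
  then have "x \<in> N #> g [^] j"
    using N.FactGroup_int_pow[OF g] repr_independenceD[OF N.subgroup_axioms x] by simp
  then obtain h where "h \<in> N" and "x = h \<otimes> g [^] j" unfolding r_coset_def by blast
  then obtain i :: int where "x = a [^] i \<otimes> g [^] j" unfolding Na generate_pow[OF a] by blast
  then have "y = (M #> a) [^]\<^bsub>G Mod M\<^esub> i \<otimes>\<^bsub>G Mod M\<^esub> (M #> g) [^]\<^bsub>G Mod M\<^esub> j"
    unfolding y using a g by (simp add: M.FactGroup_int_pow M.rcos_sum)
  then show ?thesis by blast
qed

lemma (in group) FactGroup_generate_square_cyclic_even:
  assumes a: "a \<in> carrier G" and nN: "generate G {a} \<lhd> G" and ev: "even (ord a)"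
    and cQ: "cyclic_group (G Mod generate G {a})" and oQ: "odd (order (G Mod generate G {a}))"
  shows "cyclic_group (G Mod generate G {a [^] (2::int)})
    \<and> even (order (G Mod generate G {a [^] (2::int)}))"
proof -
  define N where "N = generate G {a}"
  define M where "M = generate G {a [^] (2::int)}"
  interpret N: normal N G unfolding N_def by (rule nN)
  interpret M: normal M G unfolding M_def by (rule normal_generate_int_pow[OF a nN])
  interpret Q: group "G Mod M" by (rule M.factorgroup_is_group)
  have memM: "a [^] i \<in> M \<longleftrightarrow> even i" for i :: int
    unfolding M_def using int_pow_mem_generate_int_pow_iff[OF a] ev by simp
  define A where "A = M #> a"
  have A: "A \<in> carrier (G Mod M)" unfolding A_def carrier_FactGroup using a by blast
  have "A \<otimes>\<^bsub>G Mod M\<^esub> A = M #> a [^] (2::int)"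
    unfolding A_def using a by (simp add: M.rcos_sum int_pow_mult[of a 1 1, simplified])
  then have AA: "A \<otimes>\<^bsub>G Mod M\<^esub> A = \<one>\<^bsub>G Mod M\<^esub>"
    using M.rcos_const[OF is_group] memM by simp
  have "A \<noteq> \<one>\<^bsub>G Mod M\<^esub>"
    using coset_join1[OF _ a M.subgroup_axioms] memM[of 1] a unfolding A_def by auto
  then have "even (order (G Mod M))" by (rule Q.even_order_if_involution[OF A AA])
  have A_pow: "M #> a [^] i \<in> {\<one>\<^bsub>G Mod M\<^esub>, A}" for i :: int
  proof (cases "even i")
    case True
    then show ?thesis using M.rcos_const[OF is_group] memM by simp
  next
    case False
    have "M #> a [^] i = (M #> a [^] (i - 1)) #> a"
      using int_pow_mult[OF a, of "i - 1" 1] a M.subset by (simp add: coset_mult_assoc)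
    then show ?thesis using M.rcos_const[OF is_group] memM False A_def by simp
  qed
  obtain W where "W \<in> carrier (G Mod N)"
    and NW: "carrier (G Mod N) = range (\<lambda>k::int. W [^]\<^bsub>G Mod N\<^esub> k)"
    using cQ group.cyclic_group[OF N.factorgroup_is_group] unfolding N_def by blast
  then obtain g where g: "g \<in> carrier G" and "W = N #> g" unfolding carrier_FactGroup by blast
  with NW have Ng: "carrier (G Mod N) = range (\<lambda>k::int. (N #> g) [^]\<^bsub>G Mod N\<^esub> k)" by simp
  define Y where "Y = M #> g"
  have Y: "Y \<in> carrier (G Mod M)" unfolding Y_def carrier_FactGroup using g by blast
  have "A \<otimes>\<^bsub>G Mod M\<^esub> Y = M #> (a \<otimes> g)" unfolding A_def Y_def using a g by (simp add: M.rcos_sum)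
  also have "\<dots> = M #> (g \<otimes> a)"
    using rcos_generate_square_mult_commute[OF a nN ev g] unfolding M_def by (rule sym)
  also have "\<dots> = Y \<otimes>\<^bsub>G Mod M\<^esub> A" unfolding A_def Y_def using a g by (simp add: M.rcos_sum)
  finally have comm: "A \<otimes>\<^bsub>G Mod M\<^esub> Y = Y \<otimes>\<^bsub>G Mod M\<^esub> A" .
  have "(N #> g) [^]\<^bsub>G Mod N\<^esub> order (G Mod N) = \<one>\<^bsub>G Mod N\<^esub>"
    using N.factorgroup_is_group g by (simp add: group.pow_order_eq_1 carrier_FactGroup)
  then have "g [^] order (G Mod N) \<in> N"
    using N.FactGroup_pow[OF g] coset_join1[OF _ _ N.subgroup_axioms] g by simp
  then obtain i :: int where "g [^] order (G Mod N) = a [^] i"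
    unfolding N_def using a by (auto simp: generate_pow)
  then have "Y [^]\<^bsub>G Mod M\<^esub> order (G Mod N) \<in> {\<one>\<^bsub>G Mod M\<^esub>, A}"
    unfolding Y_def using M.FactGroup_pow[OF g] A_pow by simp
  then have "cyclic_group (G Mod M)"
    using Q.cyclic_groupI_involution_odd_power[OF A Y AA comm, of "order (G Mod N)"]
      FactGroup_generated_by_rcos[OF M.normal_axioms N.normal_axioms a N_def g Ng] oQ
    unfolding A_def Y_def N_def by blast
  with \<open>even (order (G Mod M))\<close> show ?thesis unfolding M_def by blast
qed

lemma (in group) metacyclic_even_quotient:
  assumes ev: "even (order G)" and "metacyclic G"
  shows "\<exists>N. N \<lhd> G \<and> cyclic_group (G\<lparr>carrier := N\<rparr>) \<and> cyclic_group (G Mod N)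
    \<and> even (order (G Mod N))"
proof -
  obtain N where nN: "N \<lhd> G" and cN: "cyclic_group (G\<lparr>carrier := N\<rparr>)" and cQ: "cyclic_group (G Mod N)"
    using assms(2) unfolding metacyclic_def by blast
  show ?thesis
  proof (cases "even (order (G Mod N))")
    case True
    then show ?thesis using nN cN cQ by blast
  next
    case False
    interpret N: normal N G by (rule nN)
    obtain a where a: "a \<in> carrier G" and Na: "N = generate G {a}"
      using cyclic_subgroup_eq_generate[OF N.subgroup_axioms cN] by blast
    have "card (rcosets N) * card N = order G" by (rule lagrange[OF N.subgroup_axioms])
    moreover have "order (G Mod N) = card (rcosets N)" by (simp add: order_def FactGroup_def)
    ultimately have "even (card N)" using ev False by (metis even_mult_iff)
    then have "even (ord a)" using generate_pow_card[OF a] Na by simp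
    then have "cyclic_group (G Mod generate G {a [^] (2::int)})
        \<and> even (order (G Mod generate G {a [^] (2::int)}))"
      using FactGroup_generate_square_cyclic_even[OF a] nN cQ False Na by simp
    moreover have "generate G {a [^] (2::int)} \<lhd> G" using normal_generate_int_pow[OF a] nN Na by simp
    moreover have "cyclic_group (G\<lparr>carrier := generate G {a [^] (2::int)}\<rparr>)"
      using cyclic_group_generated[of "a [^] (2::int)"] a by (simp add: subgroup_generated_def)
    ultimately show ?thesis by blast
  qed
qed

section \<open>Actions of a cyclic group on a cyclic group\<close>

lemma mod_eq_self_integer_mod_group:
  "c \<in> carrier (integer_mod_group m) \<Longrightarrow> c mod int m = c"
  by (cases "m = 0") (auto simp: carrier_integer_mod_group)

lemma integer_mod_group_endo_eq_mult:
  assumes f: "f \<in> hom (integer_mod_group m) (integer_mod_group m)" and m: "m \<noteq> 1"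
    and c: "c \<in> carrier (integer_mod_group m)"
  shows "f c = (c * f 1) mod int m"
proof -
  have one: "1 \<in> carrier (integer_mod_group m)" using m by simp
  have "c = 1 [^]\<^bsub>integer_mod_group m\<^esub> c"
    using c by (simp add: int_pow_integer_mod_group mod_eq_self_integer_mod_group)
  then have "f c = f (1 [^]\<^bsub>integer_mod_group m\<^esub> c)" by (rule arg_cong)
  also have "\<dots> = f 1 [^]\<^bsub>integer_mod_group m\<^esub> c" by (rule hom_int_pow[OF f one]) simp_all
  finally show ?thesis by (simp add: int_pow_integer_mod_group)
qed

lemma mult_AutoGroup_apply:
  "g \<in> auto G \<Longrightarrow> f \<in> auto G \<Longrightarrow> c \<in> carrier G \<Longrightarrow> (g \<otimes>\<^bsub>AutoGroup G\<^esub> f) c = g (f c)"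
  by (simp add: AutoGroup_def BijGroup_def auto_def compose_def)

lemma AutoGroup_integer_mod_group_pow:
  assumes f: "f \<in> auto (integer_mod_group m)" and m: "m \<noteq> 1"
    and c: "c \<in> carrier (integer_mod_group m)"
  shows "(f [^]\<^bsub>AutoGroup (integer_mod_group m)\<^esub> (k::nat)) c = (c * f 1 ^ k) mod int m"
  using c
proof (induction k arbitrary: c)
  case 0
  then show ?case by (simp add: AutoGroup_def BijGroup_def mod_eq_self_integer_mod_group)
next
  case (Suc k)
  interpret Aut: group "AutoGroup (integer_mod_group m)" by (simp add: group.AutoGroup)
  have hom: "f \<in> hom (integer_mod_group m) (integer_mod_group m)" using f by (simp add: auto_def)
  have "f [^]\<^bsub>AutoGroup (integer_mod_group m)\<^esub> k \<in> auto (integer_mod_group m)"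
    using Aut.nat_pow_closed f by (simp add: AutoGroup_def)
  then have "(f [^]\<^bsub>AutoGroup (integer_mod_group m)\<^esub> Suc k) c
      = (f [^]\<^bsub>AutoGroup (integer_mod_group m)\<^esub> k) (f c)"
    using f Suc.prems by (simp add: mult_AutoGroup_apply)
  also have "\<dots> = ((c * f 1) mod int m * f 1 ^ k) mod int m"
    using Suc.IH[of "f c"] hom Suc.prems integer_mod_group_endo_eq_mult[OF hom m]
    by (simp add: hom_def Pi_iff)
  also have "\<dots> = (c * f 1 ^ Suc k) mod int m" by (simp add: mod_mult_left_eq mult.assoc)
  finally show ?case .
qed

lemma hom_integer_mod_group_AutoGroupE:
  assumes phi: "phi \<in> hom (integer_mod_group n) (AutoGroup (integer_mod_group m))"
    and m: "m \<noteq> 1" and n: "n > 0"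
  obtains u :: int where "[u ^ n = 1] (mod int m)"
    and "\<And>b c. b \<in> carrier (integer_mod_group n) \<Longrightarrow> c \<in> carrier (integer_mod_group m)
           \<Longrightarrow> phi b c = (c * u ^ nat b) mod int m"
proof -
  let ?Zn = "integer_mod_group n" and ?Aut = "AutoGroup (integer_mod_group m)"
  interpret Aut: group ?Aut by (simp add: group.AutoGroup)
  define g where "g = 1 mod int n" \<comment> \<open>a generator of \<open>C\<^sub>n\<close>; note \<open>1 \<notin> carrier\<close> if \<open>n = 1\<close>\<close>
  have g: "g \<in> carrier ?Zn" using n by (simp add: carrier_integer_mod_group g_def)
  have phig: "phi g \<in> auto (integer_mod_group m)"
    using phi g by (auto simp: hom_def AutoGroup_def)
  have phi_pow: "phi (g [^]\<^bsub>?Zn\<^esub> k) = phi g [^]\<^bsub>?Aut\<^esub> k" for k :: nat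
    by (rule hom_nat_pow[OF phi g]) simp_all
  have "phi b c = (c * phi g 1 ^ nat b) mod int m"
    if b: "b \<in> carrier ?Zn" and c: "c \<in> carrier (integer_mod_group m)" for b c
  proof -
    have "b = g [^]\<^bsub>?Zn\<^esub> nat b"
      using b n by (simp add: g_def carrier_integer_mod_group mod_mult_right_eq)
    then have "phi b c = (phi g [^]\<^bsub>?Aut\<^esub> nat b) c" by (simp only: phi_pow[symmetric])
    also have "\<dots> = (c * phi g 1 ^ nat b) mod int m"
      by (rule AutoGroup_integer_mod_group_pow[OF phig m c])
    finally show ?thesis .
  qed
  moreover have "[phi g 1 ^ n = 1] (mod int m)"
  proof -
    have gn: "g [^]\<^bsub>?Zn\<^esub> n = \<one>\<^bsub>?Zn\<^esub>" by (simp add: g_def mod_mult_right_eq)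
    have "phi g [^]\<^bsub>?Aut\<^esub> n = phi (g [^]\<^bsub>?Zn\<^esub> n)" by (rule phi_pow[symmetric])
    also have "\<dots> = \<one>\<^bsub>?Aut\<^esub>" unfolding gn by (rule hom_one[OF phi]) simp_all
    finally have "phi g [^]\<^bsub>?Aut\<^esub> n = \<one>\<^bsub>?Aut\<^esub>" .
    then have "(1 * phi g 1 ^ n) mod int m = 1"
      using AutoGroup_integer_mod_group_pow[OF phig m, of 1 n] m by (simp add: AutoGroup_def BijGroup_def)
    then show ?thesis using m by (cases "m = 0") (simp_all add: cong_def)
  qed
  ultimately show ?thesis using that by blast
qed

lemma power_cong_mod_exponent:
  fixes u :: int
  assumes "[u ^ K = 1] (mod M)"
  shows "[u ^ i = u ^ (i mod K)] (mod M)"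
proof -
  have "[(u ^ K) ^ (i div K) * u ^ (i mod K) = 1 ^ (i div K) * u ^ (i mod K)] (mod M)"
    using assms by (intro cong_scalar_right cong_pow)
  then show ?thesis by (simp add: power_mult[symmetric] power_add[symmetric])
qed

lemma odd_power_cong_one_mod_two_power:
  fixes u :: int
  assumes n: "odd n" and un: "[u ^ n = 1] (mod 2 ^ k)"
  shows "[u = 1] (mod 2 ^ k)"
proof (cases "k = 0")
  case False
  have dvd: "2 ^ k dvd (u - 1) * (\<Sum>i<n. u ^ i)"
    using un by (simp add: cong_iff_dvd_diff power_diff_1_eq)
  have "(2::int) dvd 2 ^ k" using False by simp
  then have "2 dvd u ^ n - 1" using un by (meson cong_iff_dvd_diff dvd_trans)
  then have "odd u" using n by auto
  have "even (\<Sum>i<j. u ^ i) \<longleftrightarrow> even j" for j by (induction j) (use \<open>odd u\<close> in auto)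
  then have "coprime ((2::int) ^ k) (\<Sum>i<n. u ^ i)" using n by simp
  then show ?thesis using dvd by (simp add: cong_iff_dvd_diff coprime_dvd_mult_left_iff)
qed simp

lemma mult_mod_in_auto_integer_mod_group:
  assumes m: "m > 0" and w: "coprime w (int m)"
  shows "(\<lambda>x \<in> carrier (integer_mod_group m). (w * x) mod int m) \<in> auto (integer_mod_group m)"
    (is "?f \<in> _")
proof -
  let ?S = "carrier (integer_mod_group m)"
  have S: "?S = {0..<int m}" using m by (simp add: carrier_integer_mod_group)
  have hom: "?f \<in> hom (integer_mod_group m) (integer_mod_group m)"
    by (rule homI) (auto simp: S mod_add_left_eq mod_add_right_eq mod_mult_right_eq distrib_left)
  have "inj_on ?f ?S"
  proof (rule inj_onI)
    fix x y assume x: "x \<in> ?S" and y: "y \<in> ?S" and "?f x = ?f y"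
    then have "[w * x = w * y] (mod int m)" by (simp add: cong_def)
    then have "[x = y] (mod int m)" using w by (simp add: cong_mult_lcancel)
    then show "x = y" using x y cong_less_imp_eq_int[of x "int m" y] by (simp add: S)
  qed
  moreover have "?f ` ?S \<subseteq> ?S" using m by (auto simp: S)
  ultimately have "bij_betw ?f ?S ?S" by (simp add: bij_betw_def endo_inj_surj S)
  then show ?thesis using hom by (simp add: auto_def Bij_def)
qed

definition scale_by_power :: "nat \<Rightarrow> int \<Rightarrow> int \<Rightarrow> int \<Rightarrow> int"
  where "scale_by_power m u t = (\<lambda>x \<in> carrier (integer_mod_group m). (u ^ nat t * x) mod int m)"

lemma scale_by_power_hom:
  assumes m: "m > 0" and N: "N > 0" and uN: "[u ^ N = 1] (mod int m)"
  shows "scale_by_power m u \<in> hom (integer_mod_group N) (AutoGroup (integer_mod_group m))"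
proof (rule homI)
  have "coprime (u ^ N) (int m)" using cong_imp_coprime[OF cong_sym[OF uN]] by simp
  then have "coprime u (int m)" using N by simp
  then show auto: "scale_by_power m u t \<in> carrier (AutoGroup (integer_mod_group m))" for t
    unfolding scale_by_power_def AutoGroup_def
    using mult_mod_in_auto_integer_mod_group[OF m, of "u ^ nat t"] by simp
  fix t t' assume t: "t \<in> carrier (integer_mod_group N)" and t': "t' \<in> carrier (integer_mod_group N)"
  have "nat ((t + t') mod int N) = (nat t + nat t') mod N"
    using t t' N by (simp add: carrier_integer_mod_group nat_mod_distrib nat_add_distrib)
  then have "[u ^ nat ((t + t') mod int N) = u ^ (nat t + nat t')] (mod int m)"
    using power_cong_mod_exponent[OF uN, of "nat t + nat t'"] by (simp add: cong_sym)
  then have "[u ^ nat ((t + t') mod int N) * x = u ^ nat t * (u ^ nat t' * x)] (mod int m)" for x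
    using cong_scalar_right by (fastforce simp: power_add mult.assoc)
  then have "scale_by_power m u ((t + t') mod int N) x
      = scale_by_power m u t (scale_by_power m u t' x)" if "x \<in> carrier (integer_mod_group m)" for x
    using that m by (simp add: scale_by_power_def cong_def mod_mult_right_eq carrier_integer_mod_group)
  then show "scale_by_power m u (t \<otimes>\<^bsub>integer_mod_group N\<^esub> t')
      = scale_by_power m u t \<otimes>\<^bsub>AutoGroup (integer_mod_group m)\<^esub> scale_by_power m u t'"
    using auto[of t] auto[of t'] by (auto simp: AutoGroup_def BijGroup_def auto_def compose_def
        scale_by_power_def)
qed

section \<open>Moving the 2-part of the kernel into the complement\<close>

text \<open>
  With \<open>s \<equiv> 1 (mod 2\<^sup>k)\<close> and \<open>s \<equiv> 0 (mod n)\<close>, \<open>combine x y\<close> is the residue modulo \<open>2\<^sup>k n\<close>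
  that is congruent to \<open>x\<close> modulo \<open>2\<^sup>k\<close> and to \<open>y\<close> modulo \<open>n\<close>. So \<open>split_map\<close> is the
  Chinese remainder bijection \<open>C\<^sub>m \<times> C\<^sub>n \<cong> C\<^bsub>m'\<^esub> \<times> C\<^bsub>2\<^sup>k n\<^esub>\<close>; it respects the
  actions because \<open>u \<equiv> 1 (mod 2\<^sup>k)\<close>.
\<close>

locale two_part_split =
  fixes k m' n :: nat and u s :: int and phi :: "int \<Rightarrow> int \<Rightarrow> int"
  assumes odd_m': "odd m'" and odd_n: "odd n"
    and u_pow: "[u ^ n = 1] (mod int (2 ^ k * m'))"
    and s_cong_two: "[s = 1] (mod 2 ^ k)" and s_cong_n: "[s = 0] (mod int n)"
    and phi: "\<And>b c. b \<in> carrier (integer_mod_group n) \<Longrightarrow> c \<in> carrier (integer_mod_group (2 ^ k * m'))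
                \<Longrightarrow> phi b c = (c * u ^ nat b) mod int (2 ^ k * m')"
begin

definition combine :: "int \<Rightarrow> int \<Rightarrow> int"
  where "combine x y = x * s + y * (1 - s)"

definition split_map :: "int \<times> int \<Rightarrow> int \<times> int"
  where "split_map = (\<lambda>(a, b). (a mod int m', combine a b mod int (2 ^ k * n)))"

lemma m'_pos: "m' > 0" and n_pos: "n > 0"
  using odd_m' odd_n by (auto intro: odd_pos)

lemma combine_cong_two: "[combine x y = x] (mod 2 ^ k)"
proof -
  have "[1 - s = 0] (mod 2 ^ k)" using cong_diff[OF cong_refl[of 1] s_cong_two] by simp
  then have "[x * s + y * (1 - s) = x * 1 + y * 0] (mod 2 ^ k)"
    using s_cong_two by (intro cong_add cong_scalar_left)
  then show ?thesis by (simp add: combine_def)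
qed

lemma combine_cong_n: "[combine x y = y] (mod int n)"
proof -
  have "[1 - s = 1] (mod int n)" using cong_diff[OF cong_refl[of 1] s_cong_n] by simp
  then have "[x * s + y * (1 - s) = x * 0 + y * 1] (mod int n)"
    using s_cong_n by (intro cong_add cong_scalar_left)
  then show ?thesis by (simp add: combine_def)
qed

lemma cong_two_power_mult_n_iff:
  "[x = y] (mod int (2 ^ k * n)) \<longleftrightarrow> [x = y] (mod 2 ^ k) \<and> [x = y] (mod int n)"
  using odd_n by (auto intro: coprime_cong_mult cong_modulus_mult simp: mult.commute[of "2 ^ k"])

lemma u_cong_one: "[u = 1] (mod 2 ^ k)"
  using odd_power_cong_one_mod_two_power[OF odd_n] cong_modulus_mult[of _ _ "2 ^ k" "int m'"] u_pow
  by simp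

lemma u_pow_cong_m': "[u ^ n = 1] (mod int m')"
  using u_pow cong_modulus_mult[of _ _ "int m'" "2 ^ k"] by (simp add: mult.commute)

lemma split_map_hom:
  "split_map \<in> hom (semidirect_product (integer_mod_group (2 ^ k * m')) (integer_mod_group n) phi)
     (semidirect_product (integer_mod_group m') (integer_mod_group (2 ^ k * n)) (scale_by_power m' u))"
proof (rule homI)
  fix p
  show "split_map p \<in> carrier (semidirect_product (integer_mod_group m')
      (integer_mod_group (2 ^ k * n)) (scale_by_power m' u))"
    using m'_pos n_pos by (cases p) (simp add: split_map_def semidirect_product_def carrier_integer_mod_group)
next
  fix p q
  assume "p \<in> carrier (semidirect_product (integer_mod_group (2 ^ k * m')) (integer_mod_group n) phi)"
    and "q \<in> carrier (semidirect_product (integer_mod_group (2 ^ k * m')) (integer_mod_group n) phi)"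
  then obtain a b c d where pq: "p = (a, b)" "q = (c, d)" and a: "a \<in> carrier (integer_mod_group (2 ^ k * m'))"
    and b: "b \<in> carrier (integer_mod_group n)" and c: "c \<in> carrier (integer_mod_group (2 ^ k * m'))"
    by (auto simp: semidirect_product_def)
  define t where "t = combine a b mod int (2 ^ k * n)"
  have "[t = b] (mod int n)"
    unfolding t_def by (simp add: mod_mult_cong_left combine_cong_n)
  then have "t mod int n = b" using b by (simp add: cong_def mod_eq_self_integer_mod_group)
  moreover have "t \<ge> 0" using n_pos by (simp add: t_def)
  ultimately have "nat t mod n = nat b" using nat_mod_distrib[of t "int n"] by simp
  then have ut: "[u ^ nat t = u ^ nat b] (mod int m')"
    using power_cong_mod_exponent[OF u_pow_cong_m', of "nat t"] by simp
  have phi_bc: "[phi b c = c * u ^ nat b] (mod int (2 ^ k * m'))" using phi[OF b c] by (simp add: cong_def)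
  have "[a + phi b c = a + u ^ nat t * c] (mod int m')"
    using cong_dvd_modulus[OF phi_bc, of "int m'"] cong_scalar_left[OF cong_sym[OF ut], of c]
    by (intro cong_add cong_refl) (auto simp: mult.commute intro: cong_trans)
  then have fst: "(a + phi b c) mod int (2 ^ k * m') mod int m'
      = (a mod int m' + scale_by_power m' u t (c mod int m')) mod int m'"
    using m'_pos by (simp add: scale_by_power_def cong_def carrier_integer_mod_group mod_mod_cancel
        mod_add_eq mod_mult_right_eq)
  let ?R = "(a + phi b c) mod int (2 ^ k * m')" and ?Q = "(b + d) mod int n"
  have "[combine ?R ?Q = ?R] (mod 2 ^ k)" by (rule combine_cong_two)
  also have "[?R = a + c * u ^ nat b] (mod 2 ^ k)"
    using cong_modulus_mult[OF phi_bc[simplified]] by (simp add: mod_mult_cong_right cong_add)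
  also have "[a + c * u ^ nat b = a + c * 1 ^ nat b] (mod 2 ^ k)"
    using u_cong_one by (intro cong_add cong_scalar_left cong_pow) simp_all
  also have "[a + c * 1 ^ nat b = combine a b + combine c d] (mod 2 ^ k)"
    using combine_cong_two by (simp add: cong_add cong_sym)
  finally have two: "[combine ?R ?Q = combine a b + combine c d] (mod 2 ^ k)" .
  have "[combine ?R ?Q = ?Q] (mod int n)" by (rule combine_cong_n)
  also have "[?Q = combine a b + combine c d] (mod int n)"
    using combine_cong_n by (simp add: cong_add cong_sym)
  finally have "[combine ?R ?Q = combine a b + combine c d] (mod int (2 ^ k * n))"
    using two cong_two_power_mult_n_iff by blast
  then have snd: "combine ((a + phi b c) mod int (2 ^ k * m')) ((b + d) mod int n) mod int (2 ^ k * n)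
      = (t + combine c d mod int (2 ^ k * n)) mod int (2 ^ k * n)"
    by (simp add: t_def cong_def mod_add_eq)
  show "split_map (p \<otimes>\<^bsub>semidirect_product (integer_mod_group (2 ^ k * m')) (integer_mod_group n) phi\<^esub> q)
      = split_map p \<otimes>\<^bsub>semidirect_product (integer_mod_group m') (integer_mod_group (2 ^ k * n)) (scale_by_power m' u)\<^esub> split_map q"
    using fst snd by (simp add: pq split_map_def semidirect_product_def t_def)
qed

lemma split_map_inj:
  "inj_on split_map (carrier (semidirect_product (integer_mod_group (2 ^ k * m')) (integer_mod_group n) phi))"
proof (rule inj_onI)
  fix p q
  assume "p \<in> carrier (semidirect_product (integer_mod_group (2 ^ k * m')) (integer_mod_group n) phi)"
    and "q \<in> carrier (semidirect_product (integer_mod_group (2 ^ k * m')) (integer_mod_group n) phi)"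
    and eq: "split_map p = split_map q"
  then obtain a b c d where pq: "p = (a, b)" "q = (c, d)"
    and a: "a \<in> carrier (integer_mod_group (2 ^ k * m'))" and b: "b \<in> carrier (integer_mod_group n)"
    and c: "c \<in> carrier (integer_mod_group (2 ^ k * m'))" and d: "d \<in> carrier (integer_mod_group n)"
    by (auto simp: semidirect_product_def)
  have m': "[a = c] (mod int m')" and N: "[combine a b = combine c d] (mod int (2 ^ k * n))"
    using eq by (simp_all add: pq split_map_def cong_def)
  have "[a = c] (mod 2 ^ k)"
    using N combine_cong_two[of a b] combine_cong_two[of c d]
    by (meson cong_sym cong_trans cong_two_power_mult_n_iff)
  then have "[a = c] (mod int (2 ^ k * m'))"
    using m' odd_m' by (simp add: coprime_cong_mult)
  then have "a = c"
    using mod_eq_self_integer_mod_group[OF a] mod_eq_self_integer_mod_group[OF c] by (simp add: cong_def)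
  moreover have "[b = d] (mod int n)"
    using N combine_cong_n[of a b] combine_cong_n[of c d]
    by (meson cong_sym cong_trans cong_two_power_mult_n_iff)
  then have "b = d"
    using mod_eq_self_integer_mod_group[OF b] mod_eq_self_integer_mod_group[OF d] by (simp add: cong_def)
  ultimately show "p = q" using pq by simp
qed

lemma split_map_iso:
  "split_map \<in> iso (semidirect_product (integer_mod_group (2 ^ k * m')) (integer_mod_group n) phi)
     (semidirect_product (integer_mod_group m') (integer_mod_group (2 ^ k * n)) (scale_by_power m' u))"
proof -
  let ?S = "semidirect_product (integer_mod_group (2 ^ k * m')) (integer_mod_group n) phi"
    and ?T = "semidirect_product (integer_mod_group m') (integer_mod_group (2 ^ k * n)) (scale_by_power m' u)"
  have "split_map ` carrier ?S = carrier ?T"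
  proof (rule card_subset_eq)
    show "finite (carrier ?T)" using m'_pos n_pos by (simp add: semidirect_product_def carrier_integer_mod_group)
    show "split_map ` carrier ?S \<subseteq> carrier ?T" using split_map_hom by (auto simp: hom_def)
    have "card (split_map ` carrier ?S) = card (carrier ?S)" by (rule card_image[OF split_map_inj])
    also have "\<dots> = card (carrier ?T)"
      using m'_pos n_pos by (simp add: semidirect_product_def carrier_integer_mod_group card_cartesian_product
          nat_mult_distrib nat_power_eq)
    finally show "card (split_map ` carrier ?S) = card (carrier ?T)" .
  qed
  then show ?thesis using split_map_hom split_map_inj by (simp add: iso_def bij_betw_def)
qed

end

lemma semidirect_product_integer_mod_group_split_two_part:
  assumes k: "k > 0" and m': "odd m'" and n: "odd n"
    and phi: "phi \<in> hom (integer_mod_group n) (AutoGroup (integer_mod_group (2 ^ k * m')))"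
  obtains psi where "psi \<in> hom (integer_mod_group (2 ^ k * n)) (AutoGroup (integer_mod_group m'))"
    and "semidirect_product (integer_mod_group (2 ^ k * m')) (integer_mod_group n) phi
      \<cong> semidirect_product (integer_mod_group m') (integer_mod_group (2 ^ k * n)) psi"
proof -
  have "2 ^ k * m' \<noteq> 1" using k by simp
  then obtain u where u: "[u ^ n = 1] (mod int (2 ^ k * m'))"
    and phi_u: "\<And>b c. b \<in> carrier (integer_mod_group n) \<Longrightarrow> c \<in> carrier (integer_mod_group (2 ^ k * m'))
                  \<Longrightarrow> phi b c = (c * u ^ nat b) mod int (2 ^ k * m')"
    using hom_integer_mod_group_AutoGroupE[OF phi] n odd_pos by blast
  obtain s where "[s = 1] (mod 2 ^ k)" "[s = 0] (mod int n)"
    using binary_chinese_remainder_int[of "2 ^ k" "int n" 1 0] n by auto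
  then interpret two_part_split k m' n u s phi
    using m' n u phi_u by unfold_locales
  have "[(u ^ n) ^ 2 ^ k = 1 ^ 2 ^ k] (mod int m')" using u_pow_cong_m' by (rule cong_pow)
  then have "[u ^ (2 ^ k * n) = 1] (mod int m')" by (simp add: power_mult[symmetric] mult.commute)
  then have "scale_by_power m' u \<in> hom (integer_mod_group (2 ^ k * n)) (AutoGroup (integer_mod_group m'))"
    using scale_by_power_hom m'_pos n_pos by simp
  then show ?thesis using that split_map_iso is_isoI by blast
qed

lemma order_semidirect_product_integer_mod_group:
  "m > 0 \<Longrightarrow> n > 0 \<Longrightarrow> order (semidirect_product (integer_mod_group m) (integer_mod_group n) phi) = m * n"
  by (simp add: order_def semidirect_product_def carrier_integer_mod_group card_cartesian_product)

lemma split_metacyclic_with_even_factor: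
  assumes ev: "even (order G)" and G: "is_split_metacyclic_with G m n"
  shows "\<exists>m n. is_split_metacyclic_with G m n \<and> even n"
proof (cases "even n")
  case True
  then show ?thesis using G by blast
next
  case False
  obtain phi where m: "0 < m" and n: "0 < n"
    and phi: "phi \<in> hom (integer_mod_group n) (AutoGroup (integer_mod_group m))"
    and iso: "G \<cong> semidirect_product (integer_mod_group m) (integer_mod_group n) phi"
    using G unfolding is_split_metacyclic_with_def by blast
  have "order G = m * n"
    using iso_same_card[OF iso] order_semidirect_product_integer_mod_group[OF m n] by (simp add: order_def)
  then have "even m" using ev False by simp
  obtain m' where mm': "m = 2 ^ multiplicity 2 m * m'" and "odd m'"
    using multiplicity_decompose'[of m 2] m by auto
  define k where "k = multiplicity 2 m"
  have "k > 0" using \<open>even m\<close> \<open>odd m'\<close> mm' unfolding k_def by (cases "multiplicity 2 m") auto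
  then obtain psi where psi: "psi \<in> hom (integer_mod_group (2 ^ k * n)) (AutoGroup (integer_mod_group m'))"
    and "semidirect_product (integer_mod_group m) (integer_mod_group n) phi
      \<cong> semidirect_product (integer_mod_group m') (integer_mod_group (2 ^ k * n)) psi"
    using semidirect_product_integer_mod_group_split_two_part[OF _ \<open>odd m'\<close> False] phi mm' k_def
    by metis
  then have "G \<cong> semidirect_product (integer_mod_group m') (integer_mod_group (2 ^ k * n)) psi"
    using iso iso_trans by blast
  then have "is_split_metacyclic_with G m' (2 ^ k * n)"
    using psi n \<open>odd m'\<close> odd_pos unfolding is_split_metacyclic_with_def by auto
  moreover have "even (2 ^ k * n)" using \<open>k > 0\<close> by simp
  ultimately show ?thesis by blast
qed

theorem lemma4p1:
  fixes G :: "('g, 'e) monoid_scheme"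
  assumes "group G" and "finite (carrier G)" and "even (order G)" and "metacyclic G"
  shows "(\<exists>N. N \<lhd> G \<and> cyclic_group (G\<lparr>carrier := N\<rparr>) \<and> cyclic_group (G Mod N)
              \<and> even (order (G Mod N)))
       \<and> (split_metacyclic G \<longrightarrow> (\<exists>m n. is_split_metacyclic_with G m n \<and> even n))"
proof (intro conjI impI)
  show "\<exists>N. N \<lhd> G \<and> cyclic_group (G\<lparr>carrier := N\<rparr>) \<and> cyclic_group (G Mod N)
      \<and> even (order (G Mod N))"
    by (rule group.metacyclic_even_quotient[OF assms(1,3,4)])
  show "split_metacyclic G \<Longrightarrow> \<exists>m n. is_split_metacyclic_with G m n \<and> even n"
    using split_metacyclic_with_even_factor[OF assms(3)] unfolding split_metacyclic_def by blast
qed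

end
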